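(* Let $D=\tau_z h$ where $h$ is a Hermitian $2N\times 2N$ matrix and $\tau_z=\mathrm{diag}(\mathbb{1}_N,-\mathbb{1}_N)$, and assume $D$ is diagonalizable with all eigenvalues real. Let $\omega_0>0$ be such that no eigenvalue of $D$ equals $\pm\omega_0$, and let $W_+\subset\mathbb{C}^{2N}$ be the span of the eigenvectors of $D$ with eigenvalues $\omega>\omega_0$, of dimension $M$. Then the eigenvectors spanning $W_+$ may be chosen mutually orthogonal with respect to the symplectic form $\langle x|\tau_z|y\rangle$ and each with nonzero symplectic norm; let $R_+$ (resp. $R_-$) be the number of them with positive (resp. negative) symplectic norm $\langle w|\tau_z|w\rangle$, so $R_++R_-=M$. Then $W_+$ can be uniquely decomposed as a direct sum $W_+=W_{++}\oplus W_{+-}$, where $W_{++}$ and $W_{+-}$ are subspaces of dimensions $R_+$ and $R_-$ respectively, such that for all nonzero $w_+\in W_{++}$ and $w_-\in W_{+-}$: $$\operatorname{sgn}\langle w_\sigma|\tau_z|w_\sigma\rangle=\sigma\ (\sigma=\pm),\qquad \langle w_+|\tau_z|w_-\rangle=0,\qquad \langle w_+|w_-\rangle=0.$$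
   Context: $\langle\cdot|\cdot\rangle$ denotes the standard Hermitian inner product on $\mathbb{C}^{2N}$. In the physical setting, $h=h(\vec k)$ is the Bogoliubov–de Gennes matrix of a quadratic bosonic Hamiltonian at momentum $\vec k$ and $D$ is its dynamical matrix. *)

theory Defs
  imports "HOL-Analysis.Analysis"
begin

text \<open>Vectors in C^{2N} are indexed by the type 'n + 'n, where 'n has N elements:
  Inl i is the i-th of the first N coordinates, Inr i the i-th of the last N.
  Complex linear algebra uses the library interpretation vec of the complex
  vector space (*s) on complex ^ 'm (vec.span, vec.dim, vec.subspace, vec.independent).\<close>

definition tau_z :: "complex ^ ('n::finite + 'n) ^ ('n + 'n)" where
  "tau_z = (\<chi> i j. if i = j then (case i of Inl _ \<Rightarrow> 1 | Inr _ \<Rightarrow> -1) else 0)"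

definition cinner :: "complex ^ 'm::finite \<Rightarrow> complex ^ 'm \<Rightarrow> complex" where
  "cinner x y = (\<Sum>i\<in>UNIV. cnj (x $ i) * y $ i)"

definition sympl :: "complex ^ ('n::finite + 'n) \<Rightarrow> complex ^ ('n + 'n) \<Rightarrow> complex" where
  "sympl x y = cinner x (tau_z *v y)"

definition hermitian_mat :: "complex ^ 'm::finite ^ 'm \<Rightarrow> bool" where
  "hermitian_mat A \<longleftrightarrow> (\<forall>i j. A $ i $ j = cnj (A $ j $ i))"

definition is_eigenvalue :: "complex ^ 'm::finite ^ 'm \<Rightarrow> complex \<Rightarrow> bool" where
  "is_eigenvalue A l \<longleftrightarrow> (\<exists>v. v \<noteq> 0 \<and> A *v v = l *s v)"

definition is_eigenvector :: "complex ^ 'm::finite ^ 'm \<Rightarrow> complex ^ 'm \<Rightarrow> complex \<Rightarrow> bool" where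
  "is_eigenvector A v l \<longleftrightarrow> v \<noteq> 0 \<and> A *v v = l *s v"

definition diagonalizable_mat :: "complex ^ 'm::finite ^ 'm \<Rightarrow> bool" where
  "diagonalizable_mat A \<longleftrightarrow>
     (\<exists>B. vec.independent B \<and> vec.span B = UNIV \<and> (\<forall>v\<in>B. \<exists>l. is_eigenvector A v l))"

end

theory Submission
  imports Defs
begin

(* Both parts come from diagonalising a Hermitian form F against the standard inner product:
   maximising Re F(x,x) on the unit sphere of a subspace U gives u with F(z,u) = l <z|u> for all z
   in U, and induction on the orthogonal complement of u yields an orthonormal basis of U that is
   also F-orthogonal.

   For F = <.|tau_z|.> the matrix D = tau_z h is F-self-adjoint, so eigenvectors of distinct real
   eigenvalues are F-orthogonal. Since the eigenvectors of D span everything and F is nondegenerate,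
   F remains nondegenerate on every eigenspace; diagonalising F on the eigenspaces with eigenvalue
   above omega0 gives the basis of the first part.

   For the second part, diagonalise F on W+: the basis vectors of positive and of negative norm span
   W++ and W+-, which are orthogonal for both forms, and Sylvester's law of inertia matches their
   dimensions with R+ and R-. If W+ = P + M is another such splitting and e = p + m is one of these
   basis vectors, then F(p,p) = l |p|^2 and F(m,m) = l |m|^2 with the same l as F(e,e) = l |e|^2,
   so the component of the wrong sign vanishes; thus W++ lies in P and W+- in M, and counting
   dimensions gives equality. *)

lemma scaleR_eq_of_real_scale: "r *\<^sub>R (x :: complex ^ 'm) = complex_of_real r *s x"
  unfolding vec_eq_iff vector_scaleR_component by (simp add: scaleR_conv_of_real)

lemma vec_subspace_imp_subspace: "vec.subspace U \<Longrightarrow> subspace (U :: (complex ^ 'm) set)"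
  unfolding vec.subspace_def subspace_def by (simp add: scaleR_eq_of_real_scale)

lemma dim_add_le_if_Int_eq_0:
  fixes W :: "(complex ^ 'm::finite) set"
  assumes "vec.subspace X" "vec.subspace Y" "vec.subspace W" "X \<subseteq> W" "Y \<subseteq> W" "X \<inter> Y = {0}"
  shows "vec.dim X + vec.dim Y \<le> vec.dim W"
proof -
  have "{x + y | x y. x \<in> X \<and> y \<in> Y} \<subseteq> W"
    using assms(3-5) vec.subspace_add by blast
  then have "vec.dim {x + y | x y. x \<in> X \<and> y \<in> Y} \<le> vec.dim W"
    by (rule vec.dim_subset)
  then show ?thesis
    using vec.dim_sums_Int[OF assms(1,2)] assms(6) by simp
qed

section \<open>Hermitian forms\<close>

locale hermitian_form =
  fixes F :: "complex ^ 'm::finite \<Rightarrow> complex ^ 'm \<Rightarrow> complex"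
  assumes add_right: "F x (y + z) = F x y + F x z"
    and scale_right: "F x (c *s y) = c * F x y"
    and cnj_swap: "cnj (F x y) = F y x"
begin

lemma add_left: "F (x + y) z = F x z + F y z"
  by (metis add_right cnj_swap complex_cnj_add)

lemma scale_left: "F (c *s x) y = cnj c * F x y"
  by (metis scale_right cnj_swap complex_cnj_mult)

lemma zero_left [simp]: "F 0 y = 0"
  using add_left[of 0 0 y] by simp

lemma zero_right [simp]: "F x 0 = 0"
  using add_right[of x 0 0] by simp

lemma diff_left: "F (x - y) z = F x z - F y z"
  by (metis add_left eq_diff_eq)

lemma diff_right: "F x (y - z) = F x y - F x z"
  by (metis add_right eq_diff_eq)

lemma sum_left: "F (\<Sum>i\<in>I. f i) y = (\<Sum>i\<in>I. F (f i) y)"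
  by (induction I rule: infinite_finite_induct) (simp_all add: add_left)

lemma sum_right: "F x (\<Sum>i\<in>I. f i) = (\<Sum>i\<in>I. F x (f i))"
  by (induction I rule: infinite_finite_induct) (simp_all add: add_right)

lemma Im_self [simp]: "Im (F x x) = 0"
  using cnj_swap[of x x] by (simp add: complex_eq_iff)

lemma of_real_Re_self: "complex_of_real (Re (F x x)) = F x x"
  by (simp add: complex_eq_iff)

lemma sgn_self_eq_1_iff: "sgn (F x x) = 1 \<longleftrightarrow> Re (F x x) > 0"
  by (subst of_real_Re_self[symmetric]) (auto simp: sgn_of_real sgn_real_def)

lemma sgn_self_eq_minus_1_iff: "sgn (F x x) = -1 \<longleftrightarrow> Re (F x x) < 0"
  by (subst of_real_Re_self[symmetric]) (auto simp: sgn_of_real sgn_real_def)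

lemma Re_self_pos_or_neg: "F x x \<noteq> 0 \<Longrightarrow> Re (F x x) > 0 \<or> Re (F x x) < 0"
  by (metis linorder_neqE_linordered_idom of_real_0 of_real_Re_self)

lemma hermitian_form_uminus: "hermitian_form (\<lambda>x y. - F x y)"
  by unfold_locales (simp_all add: add_right scale_right cnj_swap)

lemma orthogonal_spans:
  assumes "\<forall>a\<in>A. \<forall>c\<in>C. F a c = 0" "x \<in> vec.span A" "y \<in> vec.span C"
  shows "F x y = 0"
proof -
  have Ay: "F a y = 0" if "a \<in> A" for a
    using assms(3) by (induction rule: vec.span_induct_alt)
      (simp_all add: add_right scale_right assms(1) that)
  from assms(2) show ?thesis
    by (induction rule: vec.span_induct_alt) (simp_all add: add_left scale_left Ay)
qed

lemma pairwise_orthogonal_independent: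
  assumes "pairwise (\<lambda>x y. F x y = 0) B" "\<forall>b\<in>B. F b b \<noteq> 0"
  shows "vec.independent B"
proof
  assume "vec.dependent B"
  then obtain a where a: "a \<in> B" "a \<in> vec.span (B - {a})"
    unfolding vec.dependent_def by blast
  have "F a a = 0"
    by (rule orthogonal_spans[of "{a}" "B - {a}"]) (use assms(1) a in \<open>auto simp: pairwise_def vec.span_base\<close>)
  with assms(2) a(1) show False by blast
qed

lemma self_sum_pairwise_orthogonal:
  assumes "finite E" "pairwise (\<lambda>x y. F x y = 0) E"
  shows "F (\<Sum>e\<in>E. c e *s e) (\<Sum>e\<in>E. c e *s e) = (\<Sum>e\<in>E. complex_of_real ((cmod (c e))\<^sup>2) * F e e)"
proof -
  have "F (\<Sum>e\<in>E. c e *s e) (\<Sum>e\<in>E. c e *s e) = (\<Sum>e\<in>E. \<Sum>f\<in>E. cnj (c e) * c f * F e f)"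
    by (subst sum.swap) (simp add: sum_left sum_right scale_left scale_right sum_distrib_left mult_ac)
  also have "\<dots> = (\<Sum>e\<in>E. \<Sum>f\<in>E. if f = e then cnj (c e) * c e * F e e else 0)"
    using assms(2) by (intro sum.cong refl) (auto simp: pairwise_def)
  also have "\<dots> = (\<Sum>e\<in>E. complex_of_real ((cmod (c e))\<^sup>2) * F e e)"
    using assms(1) by (simp add: complex_norm_square mult_ac del: of_real_power)
  finally show ?thesis .
qed

lemma positive_definite_span:
  assumes "finite E" "pairwise (\<lambda>x y. F x y = 0) E" "\<forall>e\<in>E. Re (F e e) > 0"
  shows "\<forall>x\<in>vec.span E. x \<noteq> 0 \<longrightarrow> Re (F x x) > 0"
proof (intro ballI impI)
  fix x assume "x \<in> vec.span E" "x \<noteq> 0"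
  then obtain c where x: "x = (\<Sum>e\<in>E. c e *s e)"
    using vec.span_finite[OF assms(1)] by auto
  have "\<exists>e\<in>E. c e \<noteq> 0"
    using \<open>x \<noteq> 0\<close> unfolding x by (metis (no_types, lifting) sum.neutral vector_smult_lzero)
  then obtain e where "e \<in> E" "c e \<noteq> 0" by blast
  have "0 < (\<Sum>e\<in>E. (cmod (c e))\<^sup>2 * Re (F e e))"
    by (rule sum_pos2[OF assms(1) \<open>e \<in> E\<close>])
      (use \<open>c e \<noteq> 0\<close> \<open>e \<in> E\<close> assms(3) in \<open>auto simp: less_imp_le\<close>)
  also have "\<dots> = Re (F x x)"
    unfolding x self_sum_pairwise_orthogonal[OF assms(1,2)] Re_sum by simp
  finally show "Re (F x x) > 0" .
qed

lemma definite_sign_parts: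
  assumes "finite B" "pairwise (\<lambda>x y. F x y = 0) B"
  shows "\<forall>x\<in>vec.span {b\<in>B. Re (F b b) > 0}. x \<noteq> 0 \<longrightarrow> Re (F x x) > 0"
    and "\<forall>x\<in>vec.span {b\<in>B. Re (F b b) < 0}. x \<noteq> 0 \<longrightarrow> Re (F x x) < 0"
proof -
  interpret neg: hermitian_form "\<lambda>x y. - F x y" by (rule hermitian_form_uminus)
  have fin: "finite {b\<in>B. Re (F b b) > 0}" "finite {b\<in>B. Re (F b b) < 0}"
    using assms(1) by simp_all
  have pos: "pairwise (\<lambda>x y. F x y = 0) {b\<in>B. Re (F b b) > 0}"
    and neg: "pairwise (\<lambda>x y. - F x y = 0) {b\<in>B. Re (F b b) < 0}"
    by (auto intro: pairwise_subset[OF assms(2)])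
  show "\<forall>x\<in>vec.span {b\<in>B. Re (F b b) > 0}. x \<noteq> 0 \<longrightarrow> Re (F x x) > 0"
    by (rule positive_definite_span[OF fin(1) pos]) simp
  have "\<forall>x\<in>vec.span {b\<in>B. Re (F b b) < 0}. x \<noteq> 0 \<longrightarrow> Re (- F x x) > 0"
    by (rule neg.positive_definite_span[OF fin(2) neg]) simp
  then show "\<forall>x\<in>vec.span {b\<in>B. Re (F b b) < 0}. x \<noteq> 0 \<longrightarrow> Re (F x x) < 0" by simp
qed

definition nondegenerate_on :: "(complex ^ 'm) set \<Rightarrow> bool" where
  "nondegenerate_on U \<longleftrightarrow> (\<forall>x\<in>U. (\<forall>z\<in>U. F z x = 0) \<longrightarrow> x = 0)"

lemma nondegenerate_on_span:
  assumes "finite B" "pairwise (\<lambda>x y. F x y = 0) B" "\<forall>b\<in>B. F b b \<noteq> 0"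
  shows "nondegenerate_on (vec.span B)"
  unfolding nondegenerate_on_def
proof (intro ballI impI)
  fix x assume "x \<in> vec.span B" and radical: "\<forall>z\<in>vec.span B. F z x = 0"
  then obtain c where x: "x = (\<Sum>e\<in>B. c e *s e)"
    using vec.span_finite[OF assms(1)] by auto
  have "c b = 0" if "b \<in> B" for b
  proof -
    have "F b x = (\<Sum>e\<in>B. if e = b then c b * F b b else 0)"
      unfolding x sum_right scale_right
      using assms(2) that by (intro sum.cong refl) (auto simp: pairwise_def)
    also have "\<dots> = c b * F b b" using assms(1) that by simp
    finally show ?thesis
      using radical assms(3) that by (simp add: vec.span_base)
  qed
  then show "x = 0" unfolding x by simp
qed

lemma continuous_on_self: "continuous_on S (\<lambda>x. F x x)"
proof -
  have "(\<lambda>x. F x x) = (\<lambda>x. \<Sum>j\<in>UNIV. \<Sum>i\<in>UNIV. cnj (x $ i) * x $ j * F (axis i 1) (axis j 1))"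
    by (rule ext, subst (1 2) basis_expansion[symmetric])
      (simp add: sum_left sum_right scale_left scale_right sum_distrib_left mult_ac)
  moreover have "continuous_on S (\<lambda>x::complex ^ 'm. x $ i)" for i
    by (intro linear_continuous_on bounded_linear_vec_nth bounded_linear_ident)
  ultimately show ?thesis
    by (simp only:) (intro continuous_on_sum continuous_on_mult continuous_on_cnj continuous_on_const)
qed

end

interpretation cinner: hermitian_form cinner
  by unfold_locales (simp_all add: cinner_def distrib_left sum.distrib sum_distrib_left mult_ac)

lemma cinner_self: "cinner x x = complex_of_real ((norm x)\<^sup>2)"
proof -
  have "cinner x x = (\<Sum>i\<in>UNIV. complex_of_real ((norm (x $ i))\<^sup>2))"
    unfolding cinner_def by (intro sum.cong refl) (simp add: complex_norm_square mult.commute del: of_real_power)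
  also have "\<dots> = complex_of_real ((norm x)\<^sup>2)"
    unfolding norm_vec_def L2_set_def by (simp add: sum_nonneg)
  finally show ?thesis .
qed

lemma cinner_self_eq_0_iff [simp]: "cinner x x = 0 \<longleftrightarrow> x = 0"
  by (simp add: cinner_self)

section \<open>Diagonalising a Hermitian form against the inner product\<close>

context hermitian_form
begin

lemma semidefinite_isotropic_orthogonal:
  assumes "vec.subspace U" "\<forall>v\<in>U. Re (F v v) \<ge> 0" "u \<in> U" "F u u = 0" "z \<in> U"
  shows "F z u = 0"
proof (rule ccontr)
  define q where "q = F z u"
  assume "F z u \<noteq> 0"
  then have q_pos: "(cmod q)\<^sup>2 > 0" unfolding q_def by simp
  define t where "t = 1 / (\<bar>Re (F z z)\<bar> + 1)"
  have "t > 0" unfolding t_def by (simp add: add_pos_nonneg)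
  have "t * Re (F z z) < 2" unfolding t_def by (simp add: divide_less_eq) linarith
  \<comment> \<open>Moving from u in the direction of z by a small multiple of F z u makes F negative.\<close>
  define v where "v = u - (of_real t * q) *s z"
  have Fvv: "F v v = of_real t * (of_real t * (q * cnj q) * F z z - 2 * (q * cnj q))"
    unfolding v_def q_def
    by (simp add: diff_left diff_right scale_left scale_right assms(4) cnj_swap algebra_simps)
  have "Re (F v v) = t * (cmod q)\<^sup>2 * (t * Re (F z z) - 2)"
    unfolding Fvv complex_norm_square[symmetric] by (simp add: algebra_simps del: of_real_power)
  also have "\<dots> < 0"
    using \<open>t > 0\<close> q_pos \<open>t * Re (F z z) < 2\<close> by (simp add: mult_pos_neg)
  finally have "Re (F v v) < 0" .
  moreover have "v \<in> U"
    unfolding v_def using assms(1,3,5) by (intro vec.subspace_diff vec.subspace_scale)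
  ultimately show False using assms(2) by fastforce
qed

text \<open>If F z e = cinner z (A e) on U, this says A e = l e; e itself need not lie in U.\<close>

definition eigenvector_on :: "(complex ^ 'm) set \<Rightarrow> real \<Rightarrow> complex ^ 'm \<Rightarrow> bool" where
  "eigenvector_on U l e \<longleftrightarrow> (\<forall>z\<in>U. F z e = of_real l * cinner z e)"

lemma exists_unit_eigenvector_on:
  assumes U: "vec.subspace U" "U \<noteq> {0}"
  shows "\<exists>u\<in>U. cinner u u = 1 \<and> (\<exists>l. eigenvector_on U l u)"
proof -
  define K where "K = U \<inter> sphere 0 1"
  have normalize: "complex_of_real (1 / norm v) *s v \<in> K" if "v \<in> U" "v \<noteq> 0" for v
  proof -
    have "norm ((1 / norm v) *\<^sub>R v) = 1" using that(2) by simp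
    then show ?thesis
      using that(1) vec.subspace_scale[OF U(1)] by (simp add: K_def scaleR_eq_of_real_scale)
  qed
  have "compact K"
    unfolding K_def using closed_subspace[OF vec_subspace_imp_subspace[OF U(1)]]
    by (intro closed_Int_compact compact_sphere)
  moreover have "K \<noteq> {}"
    using U normalize vec.subspace_0[OF U(1)] by blast
  ultimately obtain u where u: "u \<in> K" and max: "\<And>y. y \<in> K \<Longrightarrow> Re (F y y) \<le> Re (F u u)"
    using continuous_attains_sup[of K "\<lambda>x. Re (F x x)"] continuous_on_self
    by (metis continuous_on_Re)
  define l where "l = Re (F u u)"
  have "u \<in> U" and u_unit: "cinner u u = 1"
    using u by (simp_all add: K_def cinner_self)
  have bound: "Re (F v v) \<le> l * (norm v)\<^sup>2" if "v \<in> U" for v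
  proof (cases "v = 0")
    case False
    have "Re (F v v) / (norm v)\<^sup>2 = Re (F (complex_of_real (1 / norm v) *s v) (complex_of_real (1 / norm v) *s v))"
      by (simp add: scale_left scale_right power2_eq_square)
    also have "\<dots> \<le> l"
      unfolding l_def using max normalize[OF that False] by blast
    finally show ?thesis using False by (simp add: divide_le_eq)
  qed simp
  \<comment> \<open>l is the top of the spectrum on U, so l cinner - F is positive semidefinite on U and u is isotropic for it.\<close>
  interpret shifted: hermitian_form "\<lambda>x y. of_real l * cinner x y - F x y"
    by unfold_locales
      (simp_all add: cinner.add_right cinner.scale_right add_right scale_right cnj_swap cinner.cnj_swap algebra_simps)
  have "of_real l * cinner z u - F z u = 0" if "z \<in> U" for z
  proof (rule shifted.semidefinite_isotropic_orthogonal[OF U(1) _ \<open>u \<in> U\<close> _ that])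
    show "\<forall>v\<in>U. 0 \<le> Re (of_real l * cinner v v - F v v)"
      using bound by (simp add: cinner_self)
    show "of_real l * cinner u u - F u u = 0"
      using u_unit by (simp add: l_def of_real_Re_self)
  qed
  then have "eigenvector_on U l u" by (simp add: eigenvector_on_def)
  with \<open>u \<in> U\<close> u_unit show ?thesis by blast
qed

definition diagonalizing_basis :: "(complex ^ 'm) set \<Rightarrow> (complex ^ 'm) set \<Rightarrow> bool" where
  "diagonalizing_basis U E \<longleftrightarrow> vec.span E = U \<and> 0 \<notin> E \<and> pairwise (\<lambda>e f. cinner e f = 0) E
     \<and> (\<forall>e\<in>E. \<exists>l. eigenvector_on U l e)"

lemma diagonalizing_basis_independent:
  "diagonalizing_basis U E \<Longrightarrow> vec.independent E"
  unfolding diagonalizing_basis_def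
  by (intro cinner.pairwise_orthogonal_independent) auto

lemma diagonalizing_basis_finite: "diagonalizing_basis U E \<Longrightarrow> finite E"
  using diagonalizing_basis_independent vec.independent_bound_general by blast

lemma diagonalizing_basis_subset: "diagonalizing_basis U E \<Longrightarrow> E \<subseteq> U"
  unfolding diagonalizing_basis_def using vec.span_superset by blast

lemma diagonalizing_basis_eigenvector_on:
  "diagonalizing_basis U E \<Longrightarrow> e \<in> E \<Longrightarrow> \<exists>l. eigenvector_on U l e"
  by (simp add: diagonalizing_basis_def)

lemma diagonalizing_basis_orthogonal:
  assumes "diagonalizing_basis U E" shows "pairwise (\<lambda>e f. F e f = 0) E"
  unfolding pairwise_def
proof (intro ballI impI)
  fix e f assume "e \<in> E" "f \<in> E" "e \<noteq> f"
  then obtain l where "eigenvector_on U l f" and "e \<in> U" and "cinner e f = 0"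
    using assms diagonalizing_basis_subset unfolding diagonalizing_basis_def pairwise_def by blast
  then show "F e f = 0" by (simp add: eigenvector_on_def)
qed

lemma diagonalizing_basis_nonisotropic:
  assumes "diagonalizing_basis U E" "nondegenerate_on U" "e \<in> E"
  shows "F e e \<noteq> 0"
proof
  assume "F e e = 0"
  obtain l where l: "eigenvector_on U l e"
    using assms(1,3) unfolding diagonalizing_basis_def by blast
  have "e \<in> U" "e \<noteq> 0"
    using assms(1,3) diagonalizing_basis_subset unfolding diagonalizing_basis_def by auto
  with \<open>F e e = 0\<close> l have "l = 0" by (auto simp: eigenvector_on_def)
  with l have "\<forall>z\<in>U. F z e = 0" by (simp add: eigenvector_on_def)
  with assms(2) \<open>e \<in> U\<close> \<open>e \<noteq> 0\<close> show False by (simp add: nondegenerate_on_def)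
qed

lemma diagonalizing_basis_insert:
  assumes U: "vec.subspace U" and u: "u \<in> U" "cinner u u = 1" "eigenvector_on U l u"
    and E: "diagonalizing_basis {x \<in> U. cinner u x = 0} E"
  shows "diagonalizing_basis U (insert u E)"
proof -
  let ?U' = "{x \<in> U. cinner u x = 0}"
  have proj: "x - cinner u x *s u \<in> ?U'" if "x \<in> U" for x
    using that u U by (simp add: cinner.diff_right cinner.scale_right vec.subspace_diff vec.subspace_scale)
  have "E \<subseteq> ?U'" using diagonalizing_basis_subset[OF E] .
  have u_orth: "cinner u e = 0" "cinner e u = 0" "F u e = 0" if "e \<in> E" for e
  proof -
    show "cinner u e = 0" using that \<open>E \<subseteq> ?U'\<close> by blast
    then show "cinner e u = 0" using cinner.cnj_swap[of u e] by simp
    then have "F e u = 0" using u(3) that \<open>E \<subseteq> ?U'\<close> by (auto simp: eigenvector_on_def)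
    then show "F u e = 0" using cnj_swap[of e u] by simp
  qed
  have "vec.span (insert u E) = U"
  proof
    show "vec.span (insert u E) \<subseteq> U"
      using \<open>E \<subseteq> ?U'\<close> u(1) U by (intro vec.span_minimal) auto
    show "U \<subseteq> vec.span (insert u E)"
    proof
      fix x assume "x \<in> U"
      then have "x - cinner u x *s u \<in> vec.span E"
        using proj E by (simp add: diagonalizing_basis_def)
      then have "(x - cinner u x *s u) + cinner u x *s u \<in> vec.span (insert u E)"
        by (meson vec.span_add vec.span_base vec.span_mono vec.span_scale insertI1 subset_insertI subsetD)
      then show "x \<in> vec.span (insert u E)" by simp
    qed
  qed
  moreover have "eigenvector_on U le e" if "e \<in> E" "eigenvector_on ?U' le e" for e le
    unfolding eigenvector_on_def
  proof
    fix z assume "z \<in> U"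
    let ?c = "cinner u z"
    have "F z e = F (z - ?c *s u) e + cnj ?c * F u e"
      by (metis add_left diff_add_cancel scale_left)
    moreover have "cinner z e = cinner (z - ?c *s u) e + cnj ?c * cinner u e"
      by (metis cinner.add_left diff_add_cancel cinner.scale_left)
    ultimately show "F z e = of_real le * cinner z e"
      using that proj[OF \<open>z \<in> U\<close>] u_orth by (simp add: eigenvector_on_def)
  qed
  moreover have "0 \<notin> insert u E" using u(2) E by (auto simp: diagonalizing_basis_def)
  moreover have "pairwise (\<lambda>e f. cinner e f = 0) (insert u E)"
    using E u_orth by (auto simp: diagonalizing_basis_def pairwise_insert)
  ultimately show ?thesis
    using E u(3) unfolding diagonalizing_basis_def by blast
qed

lemma diagonalizing_basis_exists:
  "vec.subspace U \<Longrightarrow> \<exists>E. diagonalizing_basis U E"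
proof (induction "vec.dim U" arbitrary: U rule: less_induct)
  case less
  show ?case
  proof (cases "U = {0}")
    case True
    then show ?thesis by (intro exI[of _ "{}"]) (simp add: diagonalizing_basis_def)
  next
    case False
    then obtain u l where u: "u \<in> U" "cinner u u = 1" "eigenvector_on U l u"
      using exists_unit_eigenvector_on[OF less.prems] by blast
    let ?U' = "{x \<in> U. cinner u x = 0}"
    have "vec.subspace ?U'"
      using less.prems unfolding vec.subspace_def by (auto simp: cinner.add_right cinner.scale_right)
    moreover have "u \<notin> ?U'" using u(2) by simp
    then have "?U' \<subset> U" using u(1) by blast
    then have "vec.span ?U' \<subset> vec.span U"
      using less.prems \<open>vec.subspace ?U'\<close> by (metis vec.span_eq_iff)
    then have "vec.dim ?U' < vec.dim U" by (rule vec.dim_psubset)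
    ultimately obtain E where "diagonalizing_basis ?U' E" using less.hyps by blast
    then show ?thesis using diagonalizing_basis_insert[OF less.prems u] by blast
  qed
qed

section \<open>Definite splittings and the law of inertia\<close>

definition definite_splitting ::
    "(complex ^ 'm) set \<Rightarrow> (complex ^ 'm) set \<Rightarrow> (complex ^ 'm) set \<Rightarrow> bool" where
  "definite_splitting W P M \<longleftrightarrow> vec.subspace P \<and> vec.subspace M \<and> P \<inter> M = {0}
     \<and> {a + b | a b. a \<in> P \<and> b \<in> M} = W
     \<and> (\<forall>w\<in>P. w \<noteq> 0 \<longrightarrow> sgn (F w w) = 1) \<and> (\<forall>w\<in>M. w \<noteq> 0 \<longrightarrow> sgn (F w w) = -1)
     \<and> (\<forall>p\<in>P. \<forall>m\<in>M. p \<noteq> 0 \<longrightarrow> m \<noteq> 0 \<longrightarrow> F p m = 0 \<and> cinner p m = 0)"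

lemma definite_splitting_subset:
  assumes "definite_splitting W P M" shows "P \<subseteq> W" "M \<subseteq> W"
proof -
  have "0 \<in> P" "0 \<in> M" using assms vec.subspace_0 by (auto simp: definite_splitting_def)
  then show "P \<subseteq> W" "M \<subseteq> W"
    using assms unfolding definite_splitting_def by force+
qed

lemma definite_splitting_dim:
  "definite_splitting W P M \<Longrightarrow> vec.dim P + vec.dim M = vec.dim W"
  unfolding definite_splitting_def using vec.dim_sums_Int[of P M] by simp

lemma positive_negative_Int_eq_0:
  assumes "vec.subspace X" "\<forall>x\<in>X. x \<noteq> 0 \<longrightarrow> Re (F x x) > 0"
    and "vec.subspace Y" "\<forall>y\<in>Y. y \<noteq> 0 \<longrightarrow> Re (F y y) < 0"
  shows "X \<inter> Y = {0}"
proof -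
  have "x = 0" if "x \<in> X" "x \<in> Y" for x
  proof (rule ccontr)
    assume "x \<noteq> 0"
    then have "Re (F x x) > 0" "Re (F x x) < 0" using that assms(2,4) by blast+
    then show False by simp
  qed
  then show ?thesis using assms(1,3) vec.subspace_0 by blast
qed

lemma definite_splittingD:
  assumes "definite_splitting W P M"
  shows "vec.subspace P" "vec.subspace M" "W = {a + b | a b. a \<in> P \<and> b \<in> M}"
    and "\<forall>x\<in>P. x \<noteq> 0 \<longrightarrow> Re (F x x) > 0" "\<forall>x\<in>M. x \<noteq> 0 \<longrightarrow> Re (F x x) < 0"
    and "\<forall>p\<in>P. \<forall>m\<in>M. F p m = 0 \<and> cinner p m = 0"
proof -
  show "vec.subspace P" "vec.subspace M" "W = {a + b | a b. a \<in> P \<and> b \<in> M}"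
    using assms unfolding definite_splitting_def by simp_all
  show "\<forall>x\<in>P. x \<noteq> 0 \<longrightarrow> Re (F x x) > 0" "\<forall>x\<in>M. x \<noteq> 0 \<longrightarrow> Re (F x x) < 0"
    using assms unfolding definite_splitting_def sgn_self_eq_1_iff sgn_self_eq_minus_1_iff by simp_all
  have "F p m = 0 \<and> cinner p m = 0" if "p \<in> P" "m \<in> M" for p m
  proof (cases "p = 0 \<or> m = 0")
    case False
    then show ?thesis using assms that unfolding definite_splitting_def by blast
  qed auto
  then show "\<forall>p\<in>P. \<forall>m\<in>M. F p m = 0 \<and> cinner p m = 0" by blast
qed

lemma definite_splittingI:
  assumes "vec.subspace P" "vec.subspace M" "{a + b | a b. a \<in> P \<and> b \<in> M} = W"
    and "\<forall>x\<in>P. x \<noteq> 0 \<longrightarrow> Re (F x x) > 0" "\<forall>x\<in>M. x \<noteq> 0 \<longrightarrow> Re (F x x) < 0"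
    and "\<forall>p\<in>P. \<forall>m\<in>M. F p m = 0 \<and> cinner p m = 0"
  shows "definite_splitting W P M"
  using assms positive_negative_Int_eq_0[OF assms(1,4,2,5)]
  unfolding definite_splitting_def sgn_self_eq_1_iff sgn_self_eq_minus_1_iff by blast

lemma law_of_inertia:
  assumes "definite_splitting W P M" "vec.subspace W"
    and "vec.subspace X" "X \<subseteq> W" "\<forall>x\<in>X. x \<noteq> 0 \<longrightarrow> Re (F x x) > 0"
    and "vec.subspace Y" "Y \<subseteq> W" "\<forall>y\<in>Y. y \<noteq> 0 \<longrightarrow> Re (F y y) < 0"
    and "vec.dim X + vec.dim Y = vec.dim W"
  shows "vec.dim X = vec.dim P" "vec.dim Y = vec.dim M"
proof -
  have P: "vec.subspace P" "P \<subseteq> W" "\<forall>x\<in>P. x \<noteq> 0 \<longrightarrow> Re (F x x) > 0"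
   and M: "vec.subspace M" "M \<subseteq> W" "\<forall>y\<in>M. y \<noteq> 0 \<longrightarrow> Re (F y y) < 0"
    using assms(1) definite_splitting_subset[OF assms(1)]
    by (auto simp: definite_splitting_def sgn_self_eq_1_iff sgn_self_eq_minus_1_iff)
  have "X \<inter> M = {0}" "P \<inter> Y = {0}"
    using assms(3,5,6,8) P M by (simp_all add: positive_negative_Int_eq_0)
  then have "vec.dim X + vec.dim M \<le> vec.dim W" "vec.dim P + vec.dim Y \<le> vec.dim W"
    using dim_add_le_if_Int_eq_0[OF assms(3) M(1) assms(2,4) M(2)]
      dim_add_le_if_Int_eq_0[OF P(1) assms(6) assms(2) P(2) assms(7)] by simp_all
  then show "vec.dim X = vec.dim P" "vec.dim Y = vec.dim M"
    using assms(9) definite_splitting_dim[OF assms(1)] by linarith+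
qed

lemma eigenvector_on_component_sign:
  assumes "eigenvector_on W l e" "e \<in> W" "p \<in> W" "F p (e - p) = 0" "cinner p (e - p) = 0"
  shows "Re (F e e) * Re (F p p) \<ge> 0"
proof -
  have "F p e = F p p" "cinner p e = cinner p p"
    using assms(4,5) by (simp_all add: diff_right cinner.diff_right)
  then have "F p p = of_real l * cinner p p" "F e e = of_real l * cinner e e"
    using assms(1-3) by (simp_all add: eigenvector_on_def)
  then have "Re (F p p) = l * (norm p)\<^sup>2" "Re (F e e) = l * (norm e)\<^sup>2"
    by (simp_all add: cinner_self del: of_real_power)
  then have "Re (F e e) * Re (F p p) = (l * norm e * norm p)\<^sup>2"
    by (simp add: power_mult_distrib power2_eq_square)
  then show ?thesis by simp
qed

lemma spectral_splitting:
  assumes "nondegenerate_on W" "diagonalizing_basis W E"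
  shows "definite_splitting W (vec.span {e\<in>E. Re (F e e) > 0}) (vec.span {e\<in>E. Re (F e e) < 0})"
    (is "definite_splitting W (vec.span ?Ep) (vec.span ?Em)")
proof (rule definite_splittingI)
  have fin: "finite E" using diagonalizing_basis_finite[OF assms(2)] .
  have orth: "pairwise (\<lambda>x y. F x y = 0) E" "pairwise (\<lambda>x y. cinner x y = 0) E"
    using diagonalizing_basis_orthogonal[OF assms(2)] assms(2)
    unfolding diagonalizing_basis_def by simp_all
  have "E = ?Ep \<union> ?Em"
    using Re_self_pos_or_neg diagonalizing_basis_nonisotropic[OF assms(2,1)] by blast
  then show "{a + b | a b. a \<in> vec.span ?Ep \<and> b \<in> vec.span ?Em} = W"
    using assms(2) unfolding vec.span_Un[symmetric] diagonalizing_basis_def by simp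
  show "\<forall>x\<in>vec.span ?Ep. x \<noteq> 0 \<longrightarrow> Re (F x x) > 0"
    and "\<forall>x\<in>vec.span ?Em. x \<noteq> 0 \<longrightarrow> Re (F x x) < 0"
    using definite_sign_parts[OF fin orth(1)] by blast+
  have "a \<in> E \<and> b \<in> E \<and> a \<noteq> b" if "a \<in> ?Ep" "b \<in> ?Em" for a b
    using that by auto
  then have "\<forall>a\<in>?Ep. \<forall>b\<in>?Em. F a b = 0" "\<forall>a\<in>?Ep. \<forall>b\<in>?Em. cinner a b = 0"
    using orth unfolding pairwise_def by blast+
  then show "\<forall>p\<in>vec.span ?Ep. \<forall>m\<in>vec.span ?Em. F p m = 0 \<and> cinner p m = 0"
    using orthogonal_spans cinner.orthogonal_spans by blast
qed simp_all

lemma definite_splitting_eq_spectral: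
  assumes "definite_splitting W P M" "nondegenerate_on W" "diagonalizing_basis W E"
  shows "P = vec.span {e\<in>E. Re (F e e) > 0} \<and> M = vec.span {e\<in>E. Re (F e e) < 0}"
    (is "P = vec.span ?Ep \<and> M = vec.span ?Em")
proof -
  note P = definite_splittingD(1,4)[OF assms(1)] and M = definite_splittingD(2,5)[OF assms(1)]
  have orth: "F p m = 0" "cinner p m = 0" "F m p = 0" "cinner m p = 0" if "p \<in> P" "m \<in> M" for p m
    using definite_splittingD(6)[OF assms(1)] that cnj_swap[of p m] cinner.cnj_swap[of p m]
    by (metis complex_cnj_zero)+
  have PW: "P \<subseteq> W" and MW: "M \<subseteq> W" using definite_splitting_subset[OF assms(1)] .
  have EW: "E \<subseteq> W" using diagonalizing_basis_subset[OF assms(3)] .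
  have sign: "Re (F e e) * Re (F x x) \<ge> 0"
    if e: "e \<in> E" and x: "x \<in> W" "F x (e - x) = 0" "cinner x (e - x) = 0" for e x
  proof -
    obtain l where "eigenvector_on W l e"
      using diagonalizing_basis_eigenvector_on[OF assms(3) e] ..
    then show ?thesis
      using eigenvector_on_component_sign[OF _ subsetD[OF EW e] x] by blast
  qed
  have "?Ep \<subseteq> P"
  proof
    fix e assume e: "e \<in> ?Ep"
    then obtain p m where pm: "e = p + m" "p \<in> P" "m \<in> M"
      using definite_splittingD(3)[OF assms(1)] EW by blast
    have "Re (F e e) * Re (F m m) \<ge> 0"
      using sign[of e m] e pm orth[OF pm(2,3)] MW by auto
    then have "m = 0" using e M(2) pm(3) mult_pos_neg[of "Re (F e e)" "Re (F m m)"] by force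
    then show "e \<in> P" using pm by simp
  qed
  moreover have "?Em \<subseteq> M"
  proof
    fix e assume e: "e \<in> ?Em"
    then obtain p m where pm: "e = p + m" "p \<in> P" "m \<in> M"
      using definite_splittingD(3)[OF assms(1)] EW by blast
    have "Re (F e e) * Re (F p p) \<ge> 0"
      using sign[of e p] e pm orth[OF pm(2,3)] PW by auto
    then have "p = 0" using e P(2) pm(2) mult_neg_pos[of "Re (F e e)" "Re (F p p)"] by force
    then show "e \<in> M" using pm by simp
  qed
  ultimately have sub: "vec.span ?Ep \<subseteq> P" "vec.span ?Em \<subseteq> M"
    using P(1) M(1) by (simp_all add: vec.span_minimal)
  have "vec.dim (vec.span ?Ep) + vec.dim (vec.span ?Em) = vec.dim P + vec.dim M"
    using definite_splitting_dim[OF spectral_splitting[OF assms(2,3)]] definite_splitting_dim[OF assms(1)]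
    by simp
  moreover note vec.dim_subset[OF sub(1)] vec.dim_subset[OF sub(2)]
  ultimately have "vec.dim P \<le> vec.dim (vec.span ?Ep)" "vec.dim M \<le> vec.dim (vec.span ?Em)"
    by linarith+
  then show ?thesis
    using vec.subspace_dim_equal[OF vec.subspace_span P(1) sub(1)]
      vec.subspace_dim_equal[OF vec.subspace_span M(1) sub(2)] by simp
qed

lemma signature_splitting:
  assumes B: "vec.independent B" "pairwise (\<lambda>x y. F x y = 0) B" "\<forall>b\<in>B. F b b \<noteq> 0"
  defines "Bp \<equiv> {b\<in>B. sgn (F b b) = 1}" and "Bm \<equiv> {b\<in>B. sgn (F b b) = -1}"
  shows "card Bp + card Bm = vec.dim (vec.span B)"
    and "\<exists>!(P, M). definite_splitting (vec.span B) P M \<and> vec.dim P = card Bp \<and> vec.dim M = card Bm"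
proof -
  let ?W = "vec.span B"
  have fin: "finite B" using B(1) vec.independent_bound_general by blast
  have Bp: "Bp = {b\<in>B. Re (F b b) > 0}" and Bm: "Bm = {b\<in>B. Re (F b b) < 0}"
    unfolding Bp_def Bm_def sgn_self_eq_1_iff sgn_self_eq_minus_1_iff by simp_all
  have "B = Bp \<union> Bm" "Bp \<inter> Bm = {}"
    using B(3) Re_self_pos_or_neg unfolding Bp Bm by auto
  then show card: "card Bp + card Bm = vec.dim ?W"
    using card_Un_disjoint[of Bp Bm] fin vec.dim_span_eq_card_independent[OF B(1)] by simp
  have nondeg: "nondegenerate_on ?W" by (rule nondegenerate_on_span[OF fin B(2,3)])
  obtain E where E: "diagonalizing_basis ?W E"
    using diagonalizing_basis_exists vec.subspace_span by blast
  define P0 where "P0 = vec.span {e\<in>E. Re (F e e) > 0}"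
  define M0 where "M0 = vec.span {e\<in>E. Re (F e e) < 0}"
  have S: "definite_splitting ?W P0 M0"
    unfolding P0_def M0_def by (rule spectral_splitting[OF nondeg E])
  have "vec.dim (vec.span Bp) = card Bp" "vec.dim (vec.span Bm) = card Bm"
    using vec.dim_span_eq_card_independent vec.independent_mono[OF B(1)] \<open>B = Bp \<union> Bm\<close>
    by (metis sup_ge1, metis sup_ge2)
  moreover have "vec.span Bp \<subseteq> ?W" "vec.span Bm \<subseteq> ?W"
    using \<open>B = Bp \<union> Bm\<close> by (simp_all add: vec.span_mono)
  moreover note definite_sign_parts[OF fin B(2), folded Bp Bm]
  ultimately have "vec.dim P0 = card Bp" "vec.dim M0 = card Bm"
    using law_of_inertia[OF S vec.subspace_span vec.subspace_span _ _ vec.subspace_span] card by simp_all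
  show "\<exists>!(P, M). definite_splitting ?W P M \<and> vec.dim P = card Bp \<and> vec.dim M = card Bm"
  proof (rule ex1I[of _ "(P0, M0)"])
    fix PM assume PM: "case PM of (P, M) \<Rightarrow> definite_splitting ?W P M \<and> vec.dim P = card Bp \<and> vec.dim M = card Bm"
    obtain P M where "PM = (P, M)" by (cases PM)
    with PM have "definite_splitting ?W P M" by simp
    with \<open>PM = (P, M)\<close> show "PM = (P0, M0)"
      using definite_splitting_eq_spectral[OF _ nondeg E] unfolding P0_def M0_def by simp
  qed (use S \<open>vec.dim P0 = card Bp\<close> \<open>vec.dim M0 = card Bm\<close> in simp)
qed

section \<open>Eigenvectors of a self-adjoint matrix\<close>

lemma eigenvectors_orthogonal:
  assumes "\<forall>x y. F (D *v x) y = F x (D *v y)"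
    and "D *v x = complex_of_real a *s x" "D *v y = complex_of_real b *s y" "a \<noteq> b"
  shows "F x y = 0"
proof -
  have "of_real a * F x y = F (D *v x) y" using assms(2) by (simp add: scale_left)
  also have "\<dots> = F x (D *v y)" using assms(1) by blast
  also have "\<dots> = of_real b * F x y" using assms(3) by (simp add: scale_right)
  finally show ?thesis using assms(4) by simp
qed

lemma nondegenerate_on_eigenspace:
  assumes selfadjoint: "\<forall>x y. F (D *v x) y = F x (D *v y)"
    and "nondegenerate_on UNIV" "diagonalizable_mat D" "\<forall>l. is_eigenvalue D l \<longrightarrow> Im l = 0"
  shows "nondegenerate_on {v. D *v v = complex_of_real w *s v}"
  unfolding nondegenerate_on_def
proof (intro ballI impI)
  fix x assume x: "x \<in> {v. D *v v = complex_of_real w *s v}"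
    and radical: "\<forall>z\<in>{v. D *v v = complex_of_real w *s v}. F z x = 0"
  obtain B where B: "vec.span B = UNIV" "\<forall>b\<in>B. \<exists>l. is_eigenvector D b l"
    using assms(3) unfolding diagonalizable_mat_def by blast
  \<comment> \<open>Eigenvectors of other eigenvalues are F-orthogonal to x anyway, so x is in the radical of F on all of an eigenbasis.\<close>
  have "F b x = 0" if b: "b \<in> B" for b
  proof -
    obtain l where "is_eigenvector D b l" using B(2) b by blast
    moreover from this have "Im l = 0"
      using assms(4) unfolding is_eigenvector_def is_eigenvalue_def by blast
    ultimately have "D *v b = complex_of_real (Re l) *s b"
      by (simp add: is_eigenvector_def complex_eq_iff)
    then show ?thesis
      using radical x eigenvectors_orthogonal[OF selfadjoint, of b "Re l" x w] by (cases "Re l = w") auto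
  qed
  then have "F z x = 0" for z
    using orthogonal_spans[of B "{x}" z x] B(1) by (simp add: vec.span_base)
  then show "x = 0" using assms(2) by (simp add: nondegenerate_on_def)
qed

lemma orthogonal_eigenbasis:
  assumes selfadjoint: "\<forall>x y. F (D *v x) y = F x (D *v y)"
    and "nondegenerate_on UNIV" "diagonalizable_mat D" "\<forall>l. is_eigenvalue D l \<longrightarrow> Im l = 0"
  shows "\<exists>B. vec.independent B
    \<and> vec.span B = vec.span {v. \<exists>\<omega>\<in>S. is_eigenvector D v (complex_of_real \<omega>)}
    \<and> (\<forall>b\<in>B. \<exists>\<omega>\<in>S. is_eigenvector D b (complex_of_real \<omega>))
    \<and> pairwise (\<lambda>x y. F x y = 0) B \<and> (\<forall>b\<in>B. F b b \<noteq> 0)"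
proof -
  define V where "V \<omega> = {v. D *v v = complex_of_real \<omega> *s v}" for \<omega>
  have "vec.subspace (V \<omega>)" for \<omega>
    unfolding V_def vec.subspace_def by (simp add: matrix_vector_right_distrib vec.scale)
  then have "\<forall>\<omega>. \<exists>E. diagonalizing_basis (V \<omega>) E" using diagonalizing_basis_exists by blast
  then obtain G where G: "\<And>\<omega>. diagonalizing_basis (V \<omega>) (G \<omega>)" by metis
  have GV: "G \<omega> \<subseteq> V \<omega>" and G0: "0 \<notin> G \<omega>" for \<omega>
    using diagonalizing_basis_subset[OF G] G unfolding diagonalizing_basis_def by blast+
  define B where "B = (\<Union>\<omega>\<in>S. G \<omega>)"
  have eigen: "\<exists>\<omega>\<in>S. is_eigenvector D b (complex_of_real \<omega>)" if "b \<in> B" for b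
    using that GV G0 unfolding B_def V_def is_eigenvector_def by fastforce
  have "nondegenerate_on (V \<omega>)" for \<omega>
    unfolding V_def by (rule nondegenerate_on_eigenspace[OF assms])
  then have nonisotropic: "\<forall>b\<in>B. F b b \<noteq> 0"
    using diagonalizing_basis_nonisotropic[OF G] unfolding B_def by blast
  have orth: "pairwise (\<lambda>x y. F x y = 0) B"
    unfolding pairwise_def
  proof (intro ballI impI)
    fix x y assume "x \<in> B" "y \<in> B" "x \<noteq> y"
    then obtain \<omega> \<omega>' where "x \<in> G \<omega>" "y \<in> G \<omega>'" unfolding B_def by blast
    then show "F x y = 0"
      using diagonalizing_basis_orthogonal[OF G] \<open>x \<noteq> y\<close> GV
        eigenvectors_orthogonal[OF selfadjoint, of x \<omega> y \<omega>']
      unfolding pairwise_def V_def by (cases "\<omega> = \<omega>'") auto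
  qed
  have "vec.span B = vec.span {v. \<exists>\<omega>\<in>S. is_eigenvector D v (complex_of_real \<omega>)}"
  proof (rule vec.span_eq[THEN iffD2, OF conjI])
    show "B \<subseteq> vec.span {v. \<exists>\<omega>\<in>S. is_eigenvector D v (complex_of_real \<omega>)}"
      using eigen by (auto intro: vec.span_base)
    have "V \<omega> \<subseteq> vec.span B" if "\<omega> \<in> S" for \<omega>
      using G[of \<omega>] vec.span_mono[of "G \<omega>" B] that unfolding diagonalizing_basis_def B_def by blast
    then show "{v. \<exists>\<omega>\<in>S. is_eigenvector D v (complex_of_real \<omega>)} \<subseteq> vec.span B"
      unfolding V_def is_eigenvector_def by blast
  qed
  with pairwise_orthogonal_independent[OF orth nonisotropic] eigen orth nonisotropic show ?thesis
    by blast
qed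

end

section \<open>The symplectic form\<close>

lemma tau_z_mult_nth:
  fixes y :: "complex ^ ('n::finite + 'n)"
  shows "(tau_z *v y) $ i = (case i of Inl _ \<Rightarrow> 1 | Inr _ \<Rightarrow> -1) * y $ i"
proof -
  define c :: "'n + 'n \<Rightarrow> complex" where "c j = (case j of Inl _ \<Rightarrow> 1 | Inr _ \<Rightarrow> -1)" for j
  have "(tau_z *v y) $ i = (\<Sum>j\<in>UNIV. (if i = j then c i else 0) * y $ j)"
    unfolding matrix_vector_mult_def tau_z_def c_def by simp
  also have "\<dots> = (\<Sum>j\<in>UNIV. if i = j then c i * y $ j else 0)"
    by (intro sum.cong) auto
  finally show ?thesis unfolding c_def by simp
qed

lemma tau_z_involutive: "tau_z *v (tau_z *v y) = y"
  by (simp add: vec_eq_iff tau_z_mult_nth split: sum.split)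

lemma cinner_tau_z: "cinner (tau_z *v x) y = cinner x (tau_z *v y)"
  unfolding cinner_def tau_z_mult_nth by (intro sum.cong) (auto split: sum.split)

lemma cinner_hermitian_mat:
  assumes "hermitian_mat h"
  shows "cinner (h *v x) y = cinner x (h *v y)"
proof -
  have "cinner (h *v x) y = (\<Sum>i\<in>UNIV. \<Sum>j\<in>UNIV. cnj (h $ i $ j) * cnj (x $ j) * y $ i)"
    by (simp add: cinner_def matrix_vector_mult_def sum_distrib_right)
  also have "\<dots> = (\<Sum>i\<in>UNIV. \<Sum>j\<in>UNIV. cnj (x $ j) * (h $ j $ i * y $ i))"
    using assms unfolding hermitian_mat_def
    by (intro sum.cong refl) (metis complex_cnj_cnj mult.commute mult.left_commute)
  also have "\<dots> = cinner x (h *v y)"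
    by (subst sum.swap) (simp add: cinner_def matrix_vector_mult_def sum_distrib_left)
  finally show ?thesis .
qed

interpretation sympl: hermitian_form sympl
  by unfold_locales
    (simp_all add: sympl_def matrix_vector_right_distrib vector_scalar_commute
      cinner.add_right cinner.scale_right cinner.cnj_swap cinner_tau_z)

lemma sympl_nondegenerate: "sympl.nondegenerate_on UNIV"
  unfolding sympl.nondegenerate_on_def
proof (intro ballI impI)
  fix x assume "\<forall>z\<in>UNIV. sympl z x = 0"
  then have "cinner (tau_z *v x) (tau_z *v x) = 0" unfolding sympl_def by blast
  then show "x = 0" by (metis cinner_self_eq_0_iff tau_z_involutive matrix_vector_mult_0_right)
qed

lemma sympl_selfadjoint:
  assumes "hermitian_mat h" "D = tau_z ** h"
  shows "sympl (D *v x) y = sympl x (D *v y)"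
  using cinner_hermitian_mat[OF assms(1)]
  by (simp add: assms(2) sympl_def matrix_vector_mul_assoc[symmetric] cinner_tau_z tau_z_involutive)

theorem claim1:
  fixes h :: "complex ^ ('n::finite + 'n) ^ ('n + 'n)"
    and D :: "complex ^ ('n + 'n) ^ ('n + 'n)"
    and \<omega>0 :: real
    and Wp :: "(complex ^ ('n + 'n)) set"
  assumes herm: "hermitian_mat h"
    and D_def: "D = tau_z ** h"
    and diag: "diagonalizable_mat D"
    and real_ev: "\<forall>l. is_eigenvalue D l \<longrightarrow> Im l = 0"
    and w0_pos: "\<omega>0 > 0"
    and not_ev: "\<not> is_eigenvalue D (complex_of_real \<omega>0)"
                "\<not> is_eigenvalue D (complex_of_real (- \<omega>0))"
    and Wp_def: "Wp = vec.span {v. \<exists>\<omega>::real. \<omega> > \<omega>0 \<and> is_eigenvector D v (complex_of_real \<omega>)}"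
  shows
    "(\<exists>B. vec.independent B \<and> vec.span B = Wp
          \<and> (\<forall>b\<in>B. \<exists>\<omega>::real. \<omega> > \<omega>0 \<and> is_eigenvector D b (complex_of_real \<omega>))
          \<and> (\<forall>x\<in>B. \<forall>y\<in>B. x \<noteq> y \<longrightarrow> sympl x y = 0)
          \<and> (\<forall>b\<in>B. sympl b b \<noteq> 0))
     \<and>
     (\<forall>B. (vec.independent B \<and> vec.span B = Wp
           \<and> (\<forall>b\<in>B. \<exists>\<omega>::real. \<omega> > \<omega>0 \<and> is_eigenvector D b (complex_of_real \<omega>))
           \<and> (\<forall>x\<in>B. \<forall>y\<in>B. x \<noteq> y \<longrightarrow> sympl x y = 0)
           \<and> (\<forall>b\<in>B. sympl b b \<noteq> 0))
        \<longrightarrow>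
        (let Rp = card {b\<in>B. sgn (sympl b b) = 1};
             Rm = card {b\<in>B. sgn (sympl b b) = -1}
         in Rp + Rm = vec.dim Wp
            \<and> (\<exists>!(Wpp, Wpm). vec.subspace Wpp \<and> vec.subspace Wpm
                  \<and> Wpp \<inter> Wpm = {0}
                  \<and> {a + b | a b. a \<in> Wpp \<and> b \<in> Wpm} = Wp
                  \<and> vec.dim Wpp = Rp \<and> vec.dim Wpm = Rm
                  \<and> (\<forall>w\<in>Wpp. w \<noteq> 0 \<longrightarrow> sgn (sympl w w) = 1)
                  \<and> (\<forall>w\<in>Wpm. w \<noteq> 0 \<longrightarrow> sgn (sympl w w) = -1)
                  \<and> (\<forall>wp\<in>Wpp. \<forall>wm\<in>Wpm. wp \<noteq> 0 \<longrightarrow> wm \<noteq> 0 \<longrightarrow>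
                        sympl wp wm = 0 \<and> cinner wp wm = 0))))"
proof -
  have "\<forall>x y. sympl (D *v x) y = sympl x (D *v y)"
    using sympl_selfadjoint[OF herm D_def] by blast
  note eigenbasis = sympl.orthogonal_eigenbasis[OF this sympl_nondegenerate diag real_ev]
  show ?thesis
  proof (intro conjI allI impI, goal_cases)
    case 1
    show ?case
      using eigenbasis[of "{\<omega>. \<omega> > \<omega>0}"] unfolding Wp_def pairwise_def by simp
  next
    case (2 B)
    then show ?case
      using sympl.signature_splitting[of B]
      unfolding pairwise_def sympl.definite_splitting_def Let_def by (simp add: conj_ac)
  qed
qed

end
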